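(* Let $(\mathcal S,\mathcal Q,\Theta)$ be a Pufferfish scenario and $(\mathcal U,\omega)$ a slice profile in $\mathbb R^d$. Let $f:\mathcal X\to\mathbb R^d$ be a query, let $\zeta$ be a probability distribution on $\mathbb R^d$, and let $\mathcal M(X)=f(X)+N$ with $N\sim\zeta$ independent of $X$. Then for any $\theta\in\Theta$, any $(s_i,s_j)\in\mathcal Q$ with $P^S_\theta(s_i)>0$ and $P^S_\theta(s_j)>0$, all $\alpha>1$ and all $u\in\mathcal U$, \[ \mathtt D_\alpha\!\left(\Psi^u_\#\mathcal M^\theta_{s_i}\,\big\|\,\Psi^u_\#\mathcal M^\theta_{s_j}\right)\le R_\alpha\!\left(\zeta,\ z^u_\infty(\theta,s_i,s_j)\right), \] where $z^u_\infty(\theta,s_i,s_j):=W_\infty\!\left(\Psi^u_\# P^{f,s_i}_\theta,\ \Psi^u_\# P^{f,s_j}_\theta\right)$.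
   Context: A Pufferfish scenario $(\mathcal S,\mathcal Q,\Theta)$ consists of a set of secrets $\mathcal S$, a set of secret pairs $\mathcal Q\subseteq\mathcal S\times\mathcal S$, and a family $\Theta$ of priors; each $\theta\in\Theta$ is a joint distribution $P_\theta$ of a secret $S\in\mathcal S$ and a dataset $X\in\mathcal X$, with secret marginal $P^S_\theta$. For a query $f$, $P^{f,s}_\theta$ denotes the conditional law of $f(X)$ given $S=s$ under $\theta$. For a mechanism $\mathcal M$, $\mathcal M^\theta_s$ denotes the law of $\mathcal M(X)$ given $S=s$ under $\theta$ (here $\mathcal M^\theta_s=P^{f,s}_\theta*\zeta$). A slice profile $(\mathcal U,\omega)$ consists of a set $\mathcal U\subseteq\mathbb S^{d-1}=\{u\in\mathbb R^d:\|u\|_2=1\}$ and a probability measure $\omega$ on $\mathbb S^{d-1}$ supported on $\mathcal U$. For $u\in\mathbb S^{d-1}$, $\Psi^u(a)=\langle a,u\rangle$ and $\Psi^u_\#P$ is the pushforward $P\circ(\Psi^u)^{-1}$. The R\'enyi divergence of order $\alpha>1$ is $\mathtt D_\alpha(P\|Q)=\frac{1}{\alpha-1}\log\mathbb E_{Z\sim Q}[(\frac{dP}{dQ}(Z))^\alpha]$ (and $+\infty$ if $P\not\ll Q$). For probability measures $\nu,\mu$ on $\mathbb R$, $W_\infty(\nu,\mu)=\inf_{\pi}\sup_{(x,y)\in\mathrm{supp}(\pi)}|x-y|$, the infimum over couplings $\pi$ of $(\nu,\mu)$. For $a\in\mathbb R^d$, $\zeta_{-a}$ denotes the law of $U-a$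 with $U\sim\zeta$. The per-slice R\'enyi envelope is $R_\alpha(\zeta,r):=\sup_{a\in\mathbb R^d,\ \|a\|_2\le r}\mathtt D_\alpha(\zeta_{-a}\,\|\,\zeta)$ for $r\ge0$. *)

theory Defs
  imports "HOL-Probability.Probability"
begin

definition renyi_div :: "real \<Rightarrow> 'a measure \<Rightarrow> 'a measure \<Rightarrow> ereal" where
  "renyi_div \<alpha> P Q =
     (if sets P = sets Q \<and> absolutely_continuous Q P then
        (let I = (\<integral>\<^sup>+ x. ennreal ((enn2real (RN_deriv Q P x)) powr \<alpha>) \<partial>Q)
         in if I = \<infinity> then \<infinity> else ereal (ln (enn2real I) / (\<alpha> - 1)))
      else \<infinity>)"

definition msupport :: "'a::topological_space measure \<Rightarrow> 'a set" where
  "msupport M = {x. \<forall>U. open U \<and> x \<in> U \<longrightarrow> emeasure M U > 0}"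

definition couplings :: "real measure \<Rightarrow> real measure \<Rightarrow> (real \<times> real) measure set" where
  "couplings \<nu> \<mu> = {\<pi>. prob_space \<pi> \<and> sets \<pi> = sets (borel :: (real \<times> real) measure)
        \<and> distr \<pi> borel fst = \<nu> \<and> distr \<pi> borel snd = \<mu>}"

definition W_inf :: "real measure \<Rightarrow> real measure \<Rightarrow> ereal" where
  "W_inf \<nu> \<mu> = (INF \<pi>\<in>couplings \<nu> \<mu>. SUP p\<in>msupport \<pi>. ereal \<bar>fst p - snd p\<bar>)"

definition slice :: "'a::euclidean_space \<Rightarrow> 'a measure \<Rightarrow> real measure" where
  "slice u P = distr P borel (\<lambda>a. a \<bullet> u)"

definition shift_meas :: "'a::euclidean_space measure \<Rightarrow> 'a \<Rightarrow> 'a measure" where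
  "shift_meas \<zeta> a = distr \<zeta> borel (\<lambda>x. x - a)"

definition renyi_env :: "real \<Rightarrow> 'a::euclidean_space measure \<Rightarrow> ereal \<Rightarrow> ereal" where
  "renyi_env \<alpha> \<zeta> r = (SUP a\<in>{a. ereal (norm a) \<le> r}. renyi_div \<alpha> (shift_meas \<zeta> a) \<zeta>)"

text \<open>Pufferfish scenario: secrets Sset, secret pairs Q, priors Theta; each prior is a joint
  probability distribution of (S, X) on 's x 'x with S taking values in Sset.\<close>
definition pufferfish_scenario ::
  "'x measure \<Rightarrow> 's set \<Rightarrow> ('s \<times> 's) set \<Rightarrow> ('s \<times> 'x) measure set \<Rightarrow> bool" where
  "pufferfish_scenario SX Sset Q \<Theta> \<longleftrightarrow> Q \<subseteq> Sset \<times> Sset \<and>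
     (\<forall>\<theta>\<in>\<Theta>. prob_space \<theta> \<and> sets \<theta> = sets (count_space UNIV \<Otimes>\<^sub>M SX)
        \<and> emeasure \<theta> (Sset \<times> space SX) = 1)"

definition slice_profile :: "'a::euclidean_space set \<Rightarrow> 'a measure \<Rightarrow> bool" where
  "slice_profile U \<omega> \<longleftrightarrow> U \<subseteq> sphere 0 1 \<and> prob_space \<omega> \<and> sets \<omega> = sets borel
     \<and> (\<exists>A\<in>sets borel. A \<subseteq> U \<and> emeasure \<omega> A = 1)"

definition secret_prob :: "('s \<times> 'x) measure \<Rightarrow> 'x measure \<Rightarrow> 's \<Rightarrow> real" where
  "secret_prob \<theta> SX s = measure \<theta> ({s} \<times> space SX)"

definition cond_query_law ::
  "('s \<times> 'x) measure \<Rightarrow> 'x measure \<Rightarrow> ('x \<Rightarrow> 'a::euclidean_space) \<Rightarrow> 's \<Rightarrow> 'a measure" where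
  "cond_query_law \<theta> SX f s = distr (uniform_measure \<theta> ({s} \<times> space SX)) borel (\<lambda>p. f (snd p))"

text \<open>M^theta_s: conditional law of M(X) = f(X) + N given S = s, with N ~ zeta independent of (S,X).\<close>
definition mech_law ::
  "('s \<times> 'x) measure \<Rightarrow> 'x measure \<Rightarrow> ('x \<Rightarrow> 'a::euclidean_space) \<Rightarrow> 'a measure \<Rightarrow> 's \<Rightarrow> 'a measure" where
  "mech_law \<theta> SX f \<zeta> s =
     distr (uniform_measure \<theta> ({s} \<times> space SX) \<Otimes>\<^sub>M \<zeta>) borel (\<lambda>(p, n). f (snd p) + n)"

end

theory Submission
  imports Defs
begin

(* D_alpha(P || Q) <= r is equivalent to the dual bound
     int g dP <= exp ((alpha - 1) r) / alpha + (alpha - 1) / alpha * int g^(alpha / (alpha - 1)) dQ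
   for all nonnegative g: Young's inequality against dP/dQ gives one direction, testing with
   truncations of (dP/dQ)^(alpha - 1) the other.  The dual bound survives pushforwards and mixtures.
   The u-slice of M_s is the convolution of the u-slice of P^{f,s} with the u-slice eta of zeta.
   Coupling the two query slices through their quantile functions moves no point by more than
   W_inf.  For a coupled pair (x, y), eta shifted by y - x is the u-slice of zeta_{-(y-x)u}, so by
   data processing its divergence from eta is at most R_alpha(zeta, W_inf); integrating these
   dual bounds over the coupling gives the claim. *)

definition renyi_moment :: "real \<Rightarrow> 'a measure \<Rightarrow> 'a measure \<Rightarrow> ennreal" where
  "renyi_moment \<alpha> P Q = (\<integral>\<^sup>+x. ennreal (enn2real (RN_deriv Q P x) powr \<alpha>) \<partial>Q)"

definition renyi_dual_bound :: "real \<Rightarrow> real \<Rightarrow> 'a measure \<Rightarrow> 'a measure \<Rightarrow> bool" where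
  "renyi_dual_bound \<alpha> K P Q \<longleftrightarrow> (\<forall>g\<in>borel_measurable Q. (\<forall>x. 0 \<le> g x) \<longrightarrow>
     (\<integral>\<^sup>+x. ennreal (g x) \<partial>P)
       \<le> ennreal (K / \<alpha>) + ennreal ((\<alpha> - 1) / \<alpha>) * (\<integral>\<^sup>+x. ennreal (g x powr (\<alpha> / (\<alpha> - 1))) \<partial>Q))"

lemma renyi_div_not_minf: "renyi_div \<alpha> P Q \<noteq> -\<infinity>"
  unfolding renyi_div_def Let_def by auto

lemma renyi_div_le_erealD:
  assumes a: "\<alpha> > 1" and D: "renyi_div \<alpha> P Q \<le> ereal r"
  shows "sets P = sets Q" and "absolutely_continuous Q P"
    and "renyi_moment \<alpha> P Q \<le> ennreal (exp ((\<alpha> - 1) * r))"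
proof -
  show sPQ: "sets P = sets Q" and ac: "absolutely_continuous Q P"
    using D by (auto simp: renyi_div_def split: if_splits)
  define I where "I = renyi_moment \<alpha> P Q"
  have fin: "I \<noteq> \<infinity>" and lnI: "ln (enn2real I) / (\<alpha> - 1) \<le> r"
    using D sPQ ac by (auto simp: renyi_div_def renyi_moment_def I_def Let_def split: if_splits)
  have "enn2real I \<le> exp ((\<alpha> - 1) * r)"
  proof (cases "enn2real I = 0")
    case False
    then have "0 < enn2real I" by (simp add: order_le_neq_trans)
    moreover have "ln (enn2real I) \<le> (\<alpha> - 1) * r"
      using lnI a by (simp add: divide_le_eq mult.commute)
    ultimately show ?thesis by (metis exp_ln exp_le_cancel_iff)
  qed simp
  then have "ennreal (enn2real I) \<le> ennreal (exp ((\<alpha> - 1) * r))"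
    by (rule ennreal_leI)
  with fin show "renyi_moment \<alpha> P Q \<le> ennreal (exp ((\<alpha> - 1) * r))"
    by (simp add: I_def less_top)
qed

lemma renyi_div_le_erealI:
  assumes a: "\<alpha> > 1" and "sets P = sets Q" and "absolutely_continuous Q P"
    and I: "renyi_moment \<alpha> P Q \<le> ennreal (exp ((\<alpha> - 1) * r))" and "0 \<le> r"
  shows "renyi_div \<alpha> P Q \<le> ereal r"
proof -
  define I where "I = renyi_moment \<alpha> P Q"
  have fin: "I \<noteq> \<infinity>" using I by (auto simp: I_def top_unique)
  have "ln (enn2real I) \<le> (\<alpha> - 1) * r"
  proof (cases "enn2real I = 0")
    case False
    then have "0 < enn2real I" by (simp add: order_le_neq_trans)
    moreover have "enn2real I \<le> exp ((\<alpha> - 1) * r)"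
      using I unfolding I_def[symmetric] by (metis enn2real_ennreal enn2real_mono ennreal_less_top exp_ge_zero)
    ultimately show ?thesis by (metis ln_exp ln_mono)
  qed (use a \<open>0 \<le> r\<close> in simp)
  then have "ln (enn2real I) / (\<alpha> - 1) \<le> r"
    using a by (simp add: divide_le_eq mult.commute)
  with assms fin show ?thesis
    by (simp add: renyi_div_def renyi_moment_def I_def Let_def)
qed

lemma renyi_dual_bound_if_renyi_moment_le:
  assumes P: "prob_space P" and Q: "prob_space Q" and a: "\<alpha> > 1"
    and sPQ: "sets P = sets Q" and ac: "absolutely_continuous Q P"
    and I: "renyi_moment \<alpha> P Q \<le> ennreal K"
  shows "renyi_dual_bound \<alpha> K P Q"
  unfolding renyi_dual_bound_def
proof (intro ballI allI impI)
  interpret P: prob_space P by fact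
  interpret Q: prob_space Q by fact
  fix g :: "'a \<Rightarrow> real" assume g: "g \<in> borel_measurable Q" and g0: "\<forall>x. 0 \<le> g x"
  define \<rho> where "\<rho> x = enn2real (RN_deriv Q P x)" for x
  define \<beta> where "\<beta> = \<alpha> / (\<alpha> - 1)"
  have fin: "AE x in Q. RN_deriv Q P x \<noteq> \<infinity>"
    using sPQ ac by (intro Q.RN_deriv_finite) (auto intro: P.sigma_finite_measure)
  have "(\<integral>\<^sup>+x. ennreal (g x) \<partial>P) = (\<integral>\<^sup>+x. RN_deriv Q P x * ennreal (g x) \<partial>Q)"
    using sPQ ac g by (intro Q.RN_deriv_nn_integral) auto
  also have "\<dots> = (\<integral>\<^sup>+x. ennreal (\<rho> x * g x) \<partial>Q)"
    using fin by (intro nn_integral_cong_AE) (auto simp: \<rho>_def ennreal_mult' g0 less_top)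
  also have "\<dots> \<le> (\<integral>\<^sup>+x. ennreal (1 / \<alpha>) * ennreal (\<rho> x powr \<alpha>)
                        + ennreal ((\<alpha> - 1) / \<alpha>) * ennreal (g x powr \<beta>) \<partial>Q)"
  proof (intro nn_integral_mono)
    fix x
    have "\<rho> x * g x \<le> \<rho> x powr \<alpha> / \<alpha> + g x powr \<beta> / \<beta>"
      using a g0 by (intro Youngs_inequality) (auto simp: \<rho>_def \<beta>_def field_simps)
    also have "\<dots> = 1 / \<alpha> * \<rho> x powr \<alpha> + (\<alpha> - 1) / \<alpha> * g x powr \<beta>"
      using a by (simp add: \<beta>_def field_simps)
    finally show "ennreal (\<rho> x * g x) \<le> ennreal (1 / \<alpha>) * ennreal (\<rho> x powr \<alpha>)
                    + ennreal ((\<alpha> - 1) / \<alpha>) * ennreal (g x powr \<beta>)"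
      using a by (simp add: ennreal_mult'[symmetric] ennreal_plus[symmetric] del: ennreal_plus)
  qed
  also have "\<dots> = ennreal (1 / \<alpha>) * renyi_moment \<alpha> P Q
                   + ennreal ((\<alpha> - 1) / \<alpha>) * (\<integral>\<^sup>+x. ennreal (g x powr \<beta>) \<partial>Q)"
    using g by (simp add: nn_integral_add nn_integral_cmult renyi_moment_def \<rho>_def)
  also have "\<dots> \<le> ennreal (1 / \<alpha>) * ennreal K
                   + ennreal ((\<alpha> - 1) / \<alpha>) * (\<integral>\<^sup>+x. ennreal (g x powr \<beta>) \<partial>Q)"
    using I by (intro add_mono mult_left_mono) auto
  also have "ennreal (1 / \<alpha>) * ennreal K = ennreal (K / \<alpha>)"
    using a ennreal_mult'[of "1 / \<alpha>" K] by simp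
  finally show "(\<integral>\<^sup>+x. ennreal (g x) \<partial>P)
      \<le> ennreal (K / \<alpha>) + ennreal ((\<alpha> - 1) / \<alpha>) * (\<integral>\<^sup>+x. ennreal (g x powr (\<alpha> / (\<alpha> - 1))) \<partial>Q)"
    by (simp add: \<beta>_def)
qed

lemma one_le_if_renyi_dual_bound:
  assumes P: "prob_space P" and Q: "prob_space Q" and a: "\<alpha> > 1"
    and D: "renyi_dual_bound \<alpha> K P Q"
  shows "1 \<le> K"
proof -
  have "ennreal 1 \<le> ennreal (K / \<alpha>) + ennreal ((\<alpha> - 1) / \<alpha>)"
    using D unfolding renyi_dual_bound_def
    by (auto dest!: bspec[of _ _ "\<lambda>_. 1"]
             simp: prob_space.emeasure_space_1[OF P] prob_space.emeasure_space_1[OF Q])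
  also have "ennreal (K / \<alpha>) = ennreal (max 0 K / \<alpha>)"
    using a by (cases "K < 0") (auto simp: ennreal_lt_0 max_def divide_neg_pos)
  also have "\<dots> + ennreal ((\<alpha> - 1) / \<alpha>) = ennreal (max 0 K / \<alpha> + (\<alpha> - 1) / \<alpha>)"
    using a by simp
  finally have "1 \<le> max 0 K / \<alpha> + (\<alpha> - 1) / \<alpha>"
    using a by (subst (asm) ennreal_le_iff) auto
  then show ?thesis using a by (simp add: field_simps)
qed

lemma absolutely_continuous_if_renyi_dual_bound:
  assumes P: "finite_measure P" and sPQ: "sets P = sets Q" and D: "renyi_dual_bound \<alpha> K P Q"
  shows "absolutely_continuous Q P"
  unfolding absolutely_continuous_def
proof
  interpret P: finite_measure P by fact
  fix N assume N: "N \<in> null_sets Q"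
  then have NP: "N \<in> sets P" using sPQ by auto
  have "ennreal (c * measure P N) \<le> ennreal (K / \<alpha>)" if c: "0 < c" for c
  proof -
    have "(\<lambda>x. c * indicator N x :: real) \<in> borel_measurable Q"
      using N by (intro borel_measurable_times borel_measurable_const borel_measurable_indicator) auto
    then have "(\<integral>\<^sup>+x. ennreal (c * indicator N x) \<partial>P) \<le> ennreal (K / \<alpha>)
        + ennreal ((\<alpha> - 1) / \<alpha>) * (\<integral>\<^sup>+x. ennreal ((c * indicator N x) powr (\<alpha> / (\<alpha> - 1))) \<partial>Q)"
      using D c unfolding renyi_dual_bound_def by simp
    also have "(\<integral>\<^sup>+x. ennreal ((c * indicator N x) powr (\<alpha> / (\<alpha> - 1))) \<partial>Q) = 0"
      using AE_not_in[OF N] by (auto intro!: nn_integral_zero' elim!: eventually_mono)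
    also have "(\<integral>\<^sup>+x. ennreal (c * indicator N x) \<partial>P) = ennreal (c * measure P N)"
      using NP c by (simp add: nn_integral_cmult_indicator ennreal_indicator ennreal_mult P.emeasure_eq_measure)
    finally show ?thesis by simp
  qed
  then have bound: "c * measure P N \<le> max 0 (K / \<alpha>)" if "0 < c" for c
    using that by (fastforce simp: ennreal_le_iff2)
  have "measure P N = 0"
  proof (rule ccontr)
    assume "measure P N \<noteq> 0"
    then have m: "0 < measure P N" by (simp add: order_le_neq_trans)
    define c where "c = (max 0 (K / \<alpha>) + 1) / measure P N"
    have "c * measure P N \<le> max 0 (K / \<alpha>)"
      using m by (intro bound) (simp add: c_def add_nonneg_pos)
    then show False using m by (simp add: c_def)
  qed
  then show "N \<in> null_sets P"
    using NP by (simp add: P.emeasure_eq_measure null_sets_def)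
qed

lemma renyi_moment_eq_SUP_truncated:
  assumes a: "\<alpha> > 0"
  shows "renyi_moment \<alpha> P Q
    = (SUP n. \<integral>\<^sup>+x. ennreal (min (enn2real (RN_deriv Q P x)) (real n) powr \<alpha>) \<partial>Q)"
proof -
  define \<rho> where "\<rho> x = enn2real (RN_deriv Q P x)" for x
  have "renyi_moment \<alpha> P Q = (\<integral>\<^sup>+x. (SUP n. ennreal (min (\<rho> x) (real n) powr \<alpha>)) \<partial>Q)"
    unfolding renyi_moment_def \<rho>_def[symmetric]
  proof (intro nn_integral_cong antisym)
    fix x
    have "min (\<rho> x) (real (nat \<lceil>\<rho> x\<rceil>)) = \<rho> x" by linarith
    then show "ennreal (\<rho> x powr \<alpha>) \<le> (SUP n. ennreal (min (\<rho> x) (real n) powr \<alpha>))"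
      by (intro SUP_upper2[of "nat \<lceil>\<rho> x\<rceil>"]) auto
    show "(SUP n. ennreal (min (\<rho> x) (real n) powr \<alpha>)) \<le> ennreal (\<rho> x powr \<alpha>)"
      using a by (intro SUP_least ennreal_leI powr_mono2) (auto simp: \<rho>_def)
  qed
  also have "\<dots> = (SUP n. \<integral>\<^sup>+x. ennreal (min (\<rho> x) (real n) powr \<alpha>) \<partial>Q)"
    using a by (intro nn_integral_monotone_convergence_SUP)
      (auto simp: incseq_def le_fun_def \<rho>_def intro!: ennreal_leI powr_mono2)
  finally show ?thesis by (simp add: \<rho>_def)
qed

lemma truncated_renyi_moment_le_if_renyi_dual_bound:
  assumes P: "prob_space P" and Q: "prob_space Q" and a: "\<alpha> > 1" and K: "0 \<le> K"
    and sPQ: "sets P = sets Q" and ac: "absolutely_continuous Q P"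
    and D: "renyi_dual_bound \<alpha> K P Q"
  shows "(\<integral>\<^sup>+x. ennreal (min (enn2real (RN_deriv Q P x)) (real n) powr \<alpha>) \<partial>Q) \<le> ennreal K"
proof -
  interpret P: prob_space P by fact
  interpret Q: prob_space Q by fact
  define \<rho> where "\<rho> x = enn2real (RN_deriv Q P x)" for x
  define m where "m x = min (\<rho> x) (real n)" for x
  define E where "E = (\<integral>\<^sup>+x. ennreal (m x powr \<alpha>) \<partial>Q)"
  have m0: "0 \<le> m x" for x by (simp add: m_def \<rho>_def)
  have fin: "AE x in Q. RN_deriv Q P x \<noteq> \<infinity>"
    using sPQ ac by (intro Q.RN_deriv_finite) (auto intro: P.sigma_finite_measure)
  have "E \<le> (\<integral>\<^sup>+x. ennreal (real n powr \<alpha>) \<partial>Q)"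
    unfolding E_def using m0 a by (intro nn_integral_mono ennreal_leI powr_mono2) (auto simp: m_def)
  then obtain e where e: "E = ennreal e" "0 \<le> e"
    by (metis Q.emeasure_space_1 ennreal_cases ennreal_less_top mult.right_neutral
        nn_integral_const top.not_eq_extremum neq_top_trans)
  \<comment> \<open>\<open>m^\<alpha> \<le> \<rho> m^(\<alpha>-1)\<close>, and testing the dual bound with \<open>m^(\<alpha>-1)\<close> gives
     \<open>E \<le> K/\<alpha> + (\<alpha>-1)/\<alpha> E\<close>; truncation keeps \<open>E\<close> finite\<close>
  have "E \<le> (\<integral>\<^sup>+x. ennreal (\<rho> x * m x powr (\<alpha> - 1)) \<partial>Q)"
    unfolding E_def
  proof (intro nn_integral_mono ennreal_leI)
    fix x
    have "m x powr \<alpha> = m x * m x powr (\<alpha> - 1)"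
      using m0[of x] powr_add[of "m x" 1 "\<alpha> - 1"] by (cases "m x = 0") auto
    also have "\<dots> \<le> \<rho> x * m x powr (\<alpha> - 1)"
      by (intro mult_right_mono) (auto simp: m_def)
    finally show "m x powr \<alpha> \<le> \<rho> x * m x powr (\<alpha> - 1)" .
  qed
  also have "\<dots> = (\<integral>\<^sup>+x. RN_deriv Q P x * ennreal (m x powr (\<alpha> - 1)) \<partial>Q)"
    using fin by (intro nn_integral_cong_AE) (auto simp: \<rho>_def ennreal_mult' less_top)
  also have "\<dots> = (\<integral>\<^sup>+x. ennreal (m x powr (\<alpha> - 1)) \<partial>P)"
    using ac sPQ by (intro Q.RN_deriv_nn_integral[symmetric]) (auto simp: m_def \<rho>_def)
  also have "\<dots> \<le> ennreal (K / \<alpha>)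
      + ennreal ((\<alpha> - 1) / \<alpha>) * (\<integral>\<^sup>+x. ennreal ((m x powr (\<alpha> - 1)) powr (\<alpha> / (\<alpha> - 1))) \<partial>Q)"
    using D unfolding renyi_dual_bound_def by (auto simp: m_def \<rho>_def)
  also have "(\<integral>\<^sup>+x. ennreal ((m x powr (\<alpha> - 1)) powr (\<alpha> / (\<alpha> - 1))) \<partial>Q) = E"
    unfolding E_def using a by (simp add: powr_powr)
  finally have "ennreal e \<le> ennreal (K / \<alpha> + (\<alpha> - 1) / \<alpha> * e)"
    using a e K by (simp add: ennreal_mult'[symmetric])
  then have "e \<le> K / \<alpha> + (\<alpha> - 1) / \<alpha> * e"
    using a K e by (subst (asm) ennreal_le_iff) auto
  then have "e \<le> K" using a by (simp add: field_simps)
  then show ?thesis using e by (simp add: E_def m_def \<rho>_def ennreal_leI)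
qed

lemma renyi_moment_le_if_renyi_dual_bound:
  assumes "prob_space P" "prob_space Q" "\<alpha> > 1" "0 \<le> K"
    and "sets P = sets Q" "absolutely_continuous Q P" "renyi_dual_bound \<alpha> K P Q"
  shows "renyi_moment \<alpha> P Q \<le> ennreal K"
  using assms by (simp add: renyi_moment_eq_SUP_truncated SUP_least
      truncated_renyi_moment_le_if_renyi_dual_bound)

lemma renyi_div_le_ereal_iff_renyi_dual_bound:
  assumes P: "prob_space P" and Q: "prob_space Q" and a: "\<alpha> > 1" and sPQ: "sets P = sets Q"
  shows "renyi_div \<alpha> P Q \<le> ereal r \<longleftrightarrow> renyi_dual_bound \<alpha> (exp ((\<alpha> - 1) * r)) P Q"
proof
  assume "renyi_div \<alpha> P Q \<le> ereal r"
  then show "renyi_dual_bound \<alpha> (exp ((\<alpha> - 1) * r)) P Q"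
    using assms by (intro renyi_dual_bound_if_renyi_moment_le) (auto dest: renyi_div_le_erealD)
next
  assume D: "renyi_dual_bound \<alpha> (exp ((\<alpha> - 1) * r)) P Q"
  have ac: "absolutely_continuous Q P"
    using P sPQ D by (intro absolutely_continuous_if_renyi_dual_bound) (auto intro: prob_space.finite_measure)
  have "1 \<le> exp ((\<alpha> - 1) * r)" using one_le_if_renyi_dual_bound[OF P Q a D] .
  then have "0 \<le> r" using a by (simp add: zero_le_mult_iff)
  then show "renyi_div \<alpha> P Q \<le> ereal r"
    using assms ac D
    by (intro renyi_div_le_erealI renyi_moment_le_if_renyi_dual_bound) auto
qed

lemma renyi_div_distr_le:
  assumes P: "prob_space P" and Q: "prob_space Q" and a: "\<alpha> > 1" and sPQ: "sets P = sets Q"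
    and h: "h \<in> P \<rightarrow>\<^sub>M M"
  shows "renyi_div \<alpha> (distr P M h) (distr Q M h) \<le> renyi_div \<alpha> P Q"
proof (cases "renyi_div \<alpha> P Q")
  case (real r)
  have hQ: "h \<in> Q \<rightarrow>\<^sub>M M" using h sPQ by (simp cong: measurable_cong_sets)
  have D: "renyi_dual_bound \<alpha> (exp ((\<alpha> - 1) * r)) P Q"
    using real renyi_div_le_ereal_iff_renyi_dual_bound[OF P Q a sPQ, of r] by simp
  have "renyi_dual_bound \<alpha> (exp ((\<alpha> - 1) * r)) (distr P M h) (distr Q M h)"
    unfolding renyi_dual_bound_def
  proof (intro ballI allI impI)
    fix g :: "_ \<Rightarrow> real" assume g: "g \<in> borel_measurable (distr Q M h)" "\<forall>x. 0 \<le> g x"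
    then have "g \<circ> h \<in> borel_measurable Q" using hQ by (simp add: measurable_comp)
    then show "(\<integral>\<^sup>+x. ennreal (g x) \<partial>distr P M h) \<le> ennreal (exp ((\<alpha> - 1) * r) / \<alpha>)
        + ennreal ((\<alpha> - 1) / \<alpha>) * (\<integral>\<^sup>+x. ennreal (g x powr (\<alpha> / (\<alpha> - 1))) \<partial>distr Q M h)"
      using D g h hQ unfolding renyi_dual_bound_def by (simp add: nn_integral_distr)
  qed
  then show ?thesis
    using real assms h by (simp add: renyi_div_le_ereal_iff_renyi_dual_bound prob_space.prob_space_distr)
qed (simp_all add: renyi_div_not_minf)

lemma AE_in_msupport:
  fixes \<pi> :: "'b::second_countable_topology measure"
  assumes s: "sets \<pi> = sets borel"
  shows "AE p in \<pi>. p \<in> msupport \<pi>"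
proof -
  define F where "F = {U. open U \<and> emeasure \<pi> U = 0}"
  obtain F' where F': "F' \<subseteq> F" "countable F'" "\<Union>F' = \<Union>F"
    using Lindelof[of F] unfolding F_def by blast
  have "(\<Union>U\<in>F'. U) \<in> null_sets \<pi>"
    using F'(1,2) by (intro null_sets_UN') (auto simp: F_def null_sets_def s)
  moreover have "{x \<in> space \<pi>. x \<notin> msupport \<pi>} \<subseteq> \<Union>F'"
    unfolding F'(3) by (auto simp: msupport_def F_def not_less)
  ultimately show ?thesis by (auto intro: AE_I')
qed

lemma cdf_le_cdf_shift_if_coupling:
  assumes \<pi>: "\<pi> \<in> couplings \<nu> \<mu>" and c: "(SUP p\<in>msupport \<pi>. ereal \<bar>fst p - snd p\<bar>) < ereal c"
  shows "cdf \<nu> x \<le> cdf \<mu> (x + c)" and "cdf \<mu> x \<le> cdf \<nu> (x + c)"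
proof -
  have ps: "prob_space \<pi>" and s: "sets \<pi> = sets (borel :: (real \<times> real) measure)"
    and m1: "distr \<pi> borel fst = \<nu>" and m2: "distr \<pi> borel snd = \<mu>"
    using \<pi> by (auto simp: couplings_def)
  interpret prob_space \<pi> by fact
  have close: "AE p in \<pi>. \<bar>fst p - snd p\<bar> < c"
    using AE_in_msupport[OF s]
  proof (elim eventually_mono)
    fix p assume "p \<in> msupport \<pi>"
    then have "ereal \<bar>fst p - snd p\<bar> \<le> (SUP p\<in>msupport \<pi>. ereal \<bar>fst p - snd p\<bar>)"
      by (rule SUP_upper)
    then have "ereal \<bar>fst p - snd p\<bar> < ereal c" using c by (rule le_less_trans)
    then show "\<bar>fst p - snd p\<bar> < c" by simp
  qed
  have mf: "fst \<in> borel_measurable \<pi>" "snd \<in> borel_measurable \<pi>"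
    unfolding measurable_cong_sets[OF s refl] borel_prod[symmetric] by simp_all
  have "cdf \<nu> x = measure \<pi> (fst -` {..x} \<inter> space \<pi>)" for x
    unfolding cdf_def m1[symmetric] by (subst measure_distr) (simp_all add: mf)
  moreover have "cdf \<mu> x = measure \<pi> (snd -` {..x} \<inter> space \<pi>)" for x
    unfolding cdf_def m2[symmetric] by (subst measure_distr) (simp_all add: mf)
  ultimately show "cdf \<nu> x \<le> cdf \<mu> (x + c)" and "cdf \<mu> x \<le> cdf \<nu> (x + c)"
    using close by (auto intro!: finite_measure_mono_AE measurable_sets[OF mf(1)]
        measurable_sets[OF mf(2)] elim!: eventually_mono)
qed

lemma quantile_coupling_W_inf:
  assumes "real_distribution \<nu>" and "real_distribution \<mu>"
  obtains \<Omega> :: "real measure" and X Y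
  where "prob_space \<Omega>" and "X \<in> borel_measurable \<Omega>" and "Y \<in> borel_measurable \<Omega>"
    and "distr \<Omega> borel X = \<nu>" and "distr \<Omega> borel Y = \<mu>"
    and "\<And>\<omega>. \<omega> \<in> space \<Omega> \<Longrightarrow> ereal \<bar>X \<omega> - Y \<omega>\<bar> \<le> W_inf \<nu> \<mu>"
proof -
  interpret N: cdf_distribution \<nu> unfolding cdf_distribution_def by fact
  interpret M: cdf_distribution \<mu> unfolding cdf_distribution_def by fact
  let ?\<Omega> = "restrict_space lborel {0<..<1::real}"
  define X where "X \<omega> = Inf {x. \<omega> \<le> cdf \<nu> x}" for \<omega>
  define Y where "Y \<omega> = Inf {x. \<omega> \<le> cdf \<mu> x}" for \<omega>
  have ss: "sets ?\<Omega> = sets (restrict_space borel {0<..<1::real})"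
    by (simp add: sets_restrict_space)
  have close: "\<bar>X \<omega> - Y \<omega>\<bar> \<le> c" if \<omega>: "0 < \<omega>" "\<omega> < 1" and "W_inf \<nu> \<mu> < ereal c" for \<omega> c
  proof -
    obtain \<pi> where \<pi>: "\<pi> \<in> couplings \<nu> \<mu>"
      and lt: "(SUP p\<in>msupport \<pi>. ereal \<bar>fst p - snd p\<bar>) < ereal c"
      using \<open>W_inf \<nu> \<mu> < ereal c\<close> unfolding W_inf_def INF_less_iff by blast
    have X: "\<omega> \<le> cdf \<nu> x \<longleftrightarrow> X \<omega> \<le> x" for x
      using N.pseudoinverse[OF \<omega>] unfolding X_def .
    have Y: "\<omega> \<le> cdf \<mu> x \<longleftrightarrow> Y \<omega> \<le> x" for x
      using M.pseudoinverse[OF \<omega>] unfolding Y_def .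
    have "\<omega> \<le> cdf \<mu> (X \<omega> + c)"
      using X[of "X \<omega>"] cdf_le_cdf_shift_if_coupling(1)[OF \<pi> lt, of "X \<omega>"] by simp
    moreover have "\<omega> \<le> cdf \<nu> (Y \<omega> + c)"
      using Y[of "Y \<omega>"] cdf_le_cdf_shift_if_coupling(2)[OF \<pi> lt, of "Y \<omega>"] by simp
    ultimately have "Y \<omega> \<le> X \<omega> + c" and "X \<omega> \<le> Y \<omega> + c" using X Y by blast+
    then show ?thesis by linarith
  qed
  have "prob_space ?\<Omega>"
    by (auto simp add: emeasure_restrict_space space_restrict_space intro!: prob_spaceI)
  moreover have "X \<in> borel_measurable ?\<Omega>" "Y \<in> borel_measurable ?\<Omega>"
    using N.measurable_CI M.measurable_CI unfolding X_def Y_def measurable_cong_sets[OF ss refl] .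
  moreover have "distr ?\<Omega> borel X = \<nu>" "distr ?\<Omega> borel Y = \<mu>"
    unfolding X_def Y_def by (rule N.distr_I_eq_M M.distr_I_eq_M)+
  moreover have "ereal \<bar>X \<omega> - Y \<omega>\<bar> \<le> W_inf \<nu> \<mu>" if "\<omega> \<in> space ?\<Omega>" for \<omega>
  proof (rule dense_ge)
    fix z assume "W_inf \<nu> \<mu> < z"
    with that close show "ereal \<bar>X \<omega> - Y \<omega>\<bar> \<le> z"
      by (cases z) (auto simp: space_restrict_space)
  qed
  ultimately show thesis by (rule that)
qed

lemma prob_space_convolution:
  fixes M N :: "'a::ordered_euclidean_space measure"
  assumes "prob_space M" and "prob_space N"
    and [measurable_cong]: "sets M = sets borel" "sets N = sets borel"
  shows "prob_space (M \<star> N)"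
proof -
  interpret pair_prob_space M N using assms by (simp add: pair_prob_space_def pair_sigma_finite_def
      prob_space_imp_sigma_finite)
  show ?thesis unfolding convolution_def by (rule prob_space_distr) measurable
qed

lemma renyi_dual_bound_convolution:
  fixes \<eta> :: "real measure"
  assumes \<Omega>: "prob_space \<Omega>" and X[measurable]: "X \<in> borel_measurable \<Omega>"
    and Y[measurable]: "Y \<in> borel_measurable \<Omega>"
    and \<eta>: "prob_space \<eta>" and s\<eta>[measurable_cong]: "sets \<eta> = sets borel"
    and D: "\<And>\<omega>. \<omega> \<in> space \<Omega> \<Longrightarrow> renyi_dual_bound \<alpha> K (shift_meas \<eta> (Y \<omega> - X \<omega>)) \<eta>"
  shows "renyi_dual_bound \<alpha> K (distr \<Omega> borel X \<star> \<eta>) (distr \<Omega> borel Y \<star> \<eta>)"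
  unfolding renyi_dual_bound_def
proof (intro ballI allI impI)
  interpret \<Omega>: prob_space \<Omega> by fact
  interpret \<eta>: prob_space \<eta> by fact
  fix g :: "real \<Rightarrow> real"
  assume "g \<in> borel_measurable (distr \<Omega> borel Y \<star> \<eta>)" and g0: "\<forall>x. 0 \<le> g x"
  then have g[measurable]: "g \<in> borel_measurable borel" by simp
  define \<beta> where "\<beta> = \<alpha> / (\<alpha> - 1)"
  define c where "c = ennreal ((\<alpha> - 1) / \<alpha>)"
  define \<phi> where "\<phi> x = (\<integral>\<^sup>+n. ennreal (g (x + n)) \<partial>\<eta>)" for x
  define \<psi> where "\<psi> x = (\<integral>\<^sup>+n. ennreal (g (x + n) powr \<beta>) \<partial>\<eta>)" for x
  have [measurable]: "\<phi> \<in> borel_measurable borel" "\<psi> \<in> borel_measurable borel"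
    unfolding \<phi>_def \<psi>_def by (intro \<eta>.borel_measurable_nn_integral; measurable)+
  have fin: "finite_measure (distr \<Omega> borel Z)" if "Z \<in> borel_measurable \<Omega>" for Z :: "_ \<Rightarrow> real"
    using that by (intro prob_space.finite_measure \<Omega>.prob_space_distr)
  have conv: "(\<integral>\<^sup>+x. ennreal (h x) \<partial>(distr \<Omega> borel Z \<star> \<eta>)) = (\<integral>\<^sup>+\<omega>. \<integral>\<^sup>+n. ennreal (h (Z \<omega> + n)) \<partial>\<eta> \<partial>\<Omega>)"
    if [measurable]: "Z \<in> borel_measurable \<Omega>" "h \<in> borel_measurable borel" for Z h
    using that fin by (subst nn_integral_convolution) (auto simp: nn_integral_distr s\<eta>
        intro!: \<eta>.finite_measure_axioms \<eta>.borel_measurable_nn_integral)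
  have pointwise: "\<phi> (X \<omega>) \<le> ennreal (K / \<alpha>) + c * \<psi> (Y \<omega>)" if \<omega>: "\<omega> \<in> space \<Omega>" for \<omega>
  proof -
    define G where "G z = g (z + Y \<omega>)" for z
    have [measurable]: "G \<in> borel_measurable \<eta>" unfolding G_def by measurable
    \<comment> \<open>the shift by \<open>Y \<omega> - X \<omega>\<close> moves the test function centred at \<open>Y \<omega>\<close> to the one at \<open>X \<omega>\<close>\<close>
    have "\<phi> (X \<omega>) = (\<integral>\<^sup>+z. ennreal (G z) \<partial>shift_meas \<eta> (Y \<omega> - X \<omega>))"
      unfolding shift_meas_def by (subst nn_integral_distr) (auto simp: \<phi>_def G_def add.commute)
    also have "\<dots> \<le> ennreal (K / \<alpha>) + c * (\<integral>\<^sup>+z. ennreal (G z powr \<beta>) \<partial>\<eta>)"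
      using D[OF \<omega>] g0 unfolding renyi_dual_bound_def c_def \<beta>_def G_def by auto
    also have "(\<integral>\<^sup>+z. ennreal (G z powr \<beta>) \<partial>\<eta>) = \<psi> (Y \<omega>)"
      by (simp add: \<psi>_def G_def add.commute)
    finally show ?thesis .
  qed
  have "(\<integral>\<^sup>+x. ennreal (g x) \<partial>(distr \<Omega> borel X \<star> \<eta>)) = (\<integral>\<^sup>+\<omega>. \<phi> (X \<omega>) \<partial>\<Omega>)"
    by (simp add: conv \<phi>_def)
  also have "\<dots> \<le> (\<integral>\<^sup>+\<omega>. ennreal (K / \<alpha>) + c * \<psi> (Y \<omega>) \<partial>\<Omega>)"
    by (intro nn_integral_mono pointwise)
  also have "\<dots> = ennreal (K / \<alpha>) + c * (\<integral>\<^sup>+\<omega>. \<psi> (Y \<omega>) \<partial>\<Omega>)"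
    by (simp add: nn_integral_add nn_integral_cmult \<Omega>.emeasure_space_1)
  also have "(\<integral>\<^sup>+\<omega>. \<psi> (Y \<omega>) \<partial>\<Omega>) = (\<integral>\<^sup>+x. ennreal (g x powr \<beta>) \<partial>(distr \<Omega> borel Y \<star> \<eta>))"
    by (simp add: conv \<psi>_def)
  finally show "(\<integral>\<^sup>+x. ennreal (g x) \<partial>(distr \<Omega> borel X \<star> \<eta>)) \<le> ennreal (K / \<alpha>)
      + ennreal ((\<alpha> - 1) / \<alpha>) * (\<integral>\<^sup>+x. ennreal (g x powr (\<alpha> / (\<alpha> - 1))) \<partial>(distr \<Omega> borel Y \<star> \<eta>))"
    by (simp add: c_def \<beta>_def)
qed

lemma renyi_div_convolution_le:
  fixes \<nu> \<mu> \<eta> :: "real measure"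
  assumes \<nu>: "real_distribution \<nu>" and \<mu>: "real_distribution \<mu>"
    and \<eta>: "prob_space \<eta>" and s\<eta>: "sets \<eta> = sets borel" and a: "\<alpha> > 1"
    and shift: "\<And>t. ereal \<bar>t\<bar> \<le> W_inf \<nu> \<mu> \<Longrightarrow> renyi_div \<alpha> (shift_meas \<eta> t) \<eta> \<le> R"
  shows "renyi_div \<alpha> (\<nu> \<star> \<eta>) (\<mu> \<star> \<eta>) \<le> R"
proof -
  obtain \<Omega> :: "real measure" and X Y where \<Omega>: "prob_space \<Omega>"
    and X: "X \<in> borel_measurable \<Omega>" and Y: "Y \<in> borel_measurable \<Omega>"
    and dX: "distr \<Omega> borel X = \<nu>" and dY: "distr \<Omega> borel Y = \<mu>"
    and close: "\<And>\<omega>. \<omega> \<in> space \<Omega> \<Longrightarrow> ereal \<bar>X \<omega> - Y \<omega>\<bar> \<le> W_inf \<nu> \<mu>"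
    by (rule quantile_coupling_W_inf[OF \<nu> \<mu>]) blast
  have shift_le: "renyi_div \<alpha> (shift_meas \<eta> (Y \<omega> - X \<omega>)) \<eta> \<le> R" if "\<omega> \<in> space \<Omega>" for \<omega>
    using close[OF that] by (intro shift) (simp add: abs_minus_commute)
  have prob_shift: "prob_space (shift_meas \<eta> t)" and sets_shift: "sets (shift_meas \<eta> t) = sets \<eta>" for t
    using \<eta> s\<eta> by (auto simp: shift_meas_def intro!: prob_space.prob_space_distr)
  have prob_conv: "prob_space (\<rho> \<star> \<eta>)" if "real_distribution \<rho>" for \<rho>
    using that \<eta> s\<eta> prob_space_convolution[of \<rho> \<eta>]
    by (simp add: real_distribution_def real_distribution_axioms_def)
  obtain \<omega> where \<omega>: "\<omega> \<in> space \<Omega>" using prob_space.not_empty[OF \<Omega>] by blast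
  show ?thesis
  proof (cases R)
    case (real r)
    have "renyi_dual_bound \<alpha> (exp ((\<alpha> - 1) * r)) (shift_meas \<eta> (Y \<omega> - X \<omega>)) \<eta>"
      if "\<omega> \<in> space \<Omega>" for \<omega>
      using shift_le[OF that] real renyi_div_le_ereal_iff_renyi_dual_bound[OF prob_shift \<eta> a sets_shift]
      by simp
    then have "renyi_dual_bound \<alpha> (exp ((\<alpha> - 1) * r)) (distr \<Omega> borel X \<star> \<eta>) (distr \<Omega> borel Y \<star> \<eta>)"
      by (rule renyi_dual_bound_convolution[OF \<Omega> X Y \<eta> s\<eta>])
    then show ?thesis
      using real \<nu> \<mu> by (simp add: dX dY renyi_div_le_ereal_iff_renyi_dual_bound prob_conv a)
  next
    case MInf
    then show ?thesis using shift_le[OF \<omega>] renyi_div_not_minf[of \<alpha> _ \<eta>] by simp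
  qed simp
qed

lemma prob_space_slice:
  assumes "prob_space P" and "sets P = sets borel"
  shows "prob_space (slice u P)"
  using assms unfolding slice_def
  by (auto intro!: prob_space.prob_space_distr simp: measurable_cong_sets[OF assms(2) refl])

lemma slice_shift_meas:
  fixes \<zeta> :: "'a::euclidean_space measure"
  assumes s\<zeta>: "sets \<zeta> = sets borel" and u: "norm u = 1"
  shows "shift_meas (slice u \<zeta>) t = slice u (shift_meas \<zeta> (t *\<^sub>R u))"
proof -
  have "u \<bullet> u = 1" using u by (simp add: dot_square_norm)
  then show ?thesis
    unfolding slice_def shift_meas_def using s\<zeta>
    by (subst (1 2) distr_distr) (auto simp: comp_def inner_diff_left cong: measurable_cong_sets)
qed

lemma renyi_div_slice_shift_le_renyi_env:
  fixes \<zeta> :: "'a::euclidean_space measure"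
  assumes \<zeta>: "prob_space \<zeta>" and s\<zeta>: "sets \<zeta> = sets borel" and u: "norm u = 1"
    and a: "\<alpha> > 1" and t: "ereal \<bar>t\<bar> \<le> r"
  shows "renyi_div \<alpha> (shift_meas (slice u \<zeta>) t) (slice u \<zeta>) \<le> renyi_env \<alpha> \<zeta> r"
proof -
  have "renyi_div \<alpha> (shift_meas (slice u \<zeta>) t) (slice u \<zeta>)
      = renyi_div \<alpha> (slice u (shift_meas \<zeta> (t *\<^sub>R u))) (slice u \<zeta>)"
    by (simp only: slice_shift_meas[OF s\<zeta> u])
  also have "\<dots> \<le> renyi_div \<alpha> (shift_meas \<zeta> (t *\<^sub>R u)) \<zeta>"
    unfolding slice_def using \<zeta> s\<zeta> a
    by (intro renyi_div_distr_le) (auto simp: shift_meas_def intro!: prob_space.prob_space_distr)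
  also have "\<dots> \<le> renyi_env \<alpha> \<zeta> r"
    unfolding renyi_env_def using t u by (intro SUP_upper) simp
  finally show ?thesis .
qed

lemma slice_mech_law_eq_convolution:
  fixes \<theta> :: "('s \<times> 'x) measure" and f :: "'x \<Rightarrow> 'a::euclidean_space"
  assumes \<theta>: "prob_space \<theta>" and s\<theta>: "sets \<theta> = sets (count_space UNIV \<Otimes>\<^sub>M SX)"
    and f[measurable]: "f \<in> SX \<rightarrow>\<^sub>M borel"
    and \<zeta>: "prob_space \<zeta>" and s\<zeta>[measurable_cong]: "sets \<zeta> = sets borel"
    and pos: "secret_prob \<theta> SX s > 0"
  shows "slice u (mech_law \<theta> SX f \<zeta> s) = (slice u (cond_query_law \<theta> SX f s) \<star> slice u \<zeta>)"
    and "real_distribution (slice u (cond_query_law \<theta> SX f s))"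
proof -
  interpret \<theta>: prob_space \<theta> by fact
  interpret \<zeta>: prob_space \<zeta> by fact
  define A where "A = {s} \<times> space SX"
  define Us where "Us = uniform_measure \<theta> A"
  have "A \<in> sets \<theta>" unfolding A_def s\<theta> by (intro pair_measureI) auto
  moreover have "emeasure \<theta> A = ennreal (secret_prob \<theta> SX s)"
    by (simp add: secret_prob_def A_def \<theta>.emeasure_eq_measure)
  ultimately have "prob_space Us"
    using pos unfolding Us_def by (intro prob_space_uniform_measure) auto
  then interpret Us: prob_space Us .
  have sUs[measurable_cong]: "sets Us = sets (count_space UNIV \<Otimes>\<^sub>M SX)"
    unfolding Us_def by (simp add: s\<theta>)
  have cond: "slice u (cond_query_law \<theta> SX f s) = distr Us borel (\<lambda>p. f (snd p) \<bullet> u)"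
    unfolding slice_def cond_query_law_def Us_def[symmetric] A_def[symmetric]
    by (subst distr_distr) (auto simp: comp_def)
  show "real_distribution (slice u (cond_query_law \<theta> SX f s))"
    unfolding cond real_distribution_def real_distribution_axioms_def by (auto intro!: Us.prob_space_distr)
  interpret pair_prob_space Us \<zeta> ..
  have "(slice u (cond_query_law \<theta> SX f s) \<star> slice u \<zeta>)
      = distr (distr (Us \<Otimes>\<^sub>M \<zeta>) (borel \<Otimes>\<^sub>M borel) (\<lambda>(p, n). (f (snd p) \<bullet> u, n \<bullet> u))) borel
          (\<lambda>(x, y). x + y)"
    unfolding convolution_def cond slice_def[of u \<zeta>]
    by (subst pair_measure_distr) (auto intro!: prob_space_imp_sigma_finite \<zeta>.prob_space_distr)
  also have "\<dots> = slice u (mech_law \<theta> SX f \<zeta> s)"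
    unfolding slice_def mech_law_def Us_def[symmetric] A_def[symmetric]
    by (subst (1 2) distr_distr) (auto simp: comp_def case_prod_beta inner_add_left)
  finally show "slice u (mech_law \<theta> SX f \<zeta> s) = (slice u (cond_query_law \<theta> SX f s) \<star> slice u \<zeta>)" ..
qed

theorem lemma1:
  fixes SX :: "'x measure" and Sset :: "'s set" and Q :: "('s \<times> 's) set"
    and \<Theta> :: "('s \<times> 'x) measure set"
    and U :: "'a::euclidean_space set" and \<omega> :: "'a measure"
    and f :: "'x \<Rightarrow> 'a" and \<zeta> :: "'a measure"
    and \<theta> :: "('s \<times> 'x) measure" and si sj :: 's and \<alpha> :: real and u :: 'a
  assumes "pufferfish_scenario SX Sset Q \<Theta>"
    and "slice_profile U \<omega>"
    and "f \<in> SX \<rightarrow>\<^sub>M borel"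
    and "prob_space \<zeta>" and "sets \<zeta> = sets borel"
    and "\<theta> \<in> \<Theta>" and "(si, sj) \<in> Q"
    and "secret_prob \<theta> SX si > 0" and "secret_prob \<theta> SX sj > 0"
    and "\<alpha> > 1" and "u \<in> U"
  shows "renyi_div \<alpha> (slice u (mech_law \<theta> SX f \<zeta> si)) (slice u (mech_law \<theta> SX f \<zeta> sj))
         \<le> renyi_env \<alpha> \<zeta> (W_inf (slice u (cond_query_law \<theta> SX f si))
                                  (slice u (cond_query_law \<theta> SX f sj)))"
proof -
  have \<theta>: "prob_space \<theta>" "sets \<theta> = sets (count_space UNIV \<Otimes>\<^sub>M SX)"
    using assms(1,6) by (auto simp: pufferfish_scenario_def)
  have u: "norm u = 1" using assms(2,11) by (auto simp: slice_profile_def)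
  note si = slice_mech_law_eq_convolution[OF \<theta> assms(3-5,8), of u]
  note sj = slice_mech_law_eq_convolution[OF \<theta> assms(3-5,9), of u]
  have \<eta>: "prob_space (slice u \<zeta>)" and s\<eta>: "sets (slice u \<zeta>) = sets borel"
    using assms(4,5) prob_space_slice by (auto simp: slice_def)
  show ?thesis
    unfolding si(1) sj(1)
    by (rule renyi_div_convolution_le[OF si(2) sj(2) \<eta> s\<eta> assms(10)],
        rule renyi_div_slice_shift_le_renyi_env[OF assms(4,5) u assms(10)])
qed

end
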